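(* Let $a\ge2$, $d\ge1$ and $s$ be integers with $\gcd(a,d)=1$ and $1\le s<a$, and write $c=\lceil (a-1)/s\rceil$. Let $\mathit{NR}$ be the set of positive integers not representable as $\sum_{i=0}^s(a+id)x_i$ with $x_0,\dots,x_s$ nonnegative integers, and let $S_m=\sum_{n\in\mathit{NR}}n^m$. Then \[ 2S_0=-sc^2+(2a-2+s)c+(a-1)(d-1), \] \[ 12S_1=-2s(2a+ds)c^3+\bigl(6a^2+3(2a+ds)(s-1)\bigr)c^2+\bigl(6(d-1)a(a-1)+(3d-2a-ds)s\bigr)c+(a-1)(d-1)(2ad-a-d-1), \] \[ \begin{aligned} 12S_2={}&-s\bigl((a+sd)(2a+sd)+a^2\bigr)c^4+\bigl(4a^3+2(3s-2)a^2+2sd(3s-2)a+2s^2d^2(s-1)\bigr)c^3\\ &+\bigl(6(d-1)a^3+3(2-s-2d)a^2-3sd(s-2)a-sd^2(s^2-3s+1)\bigr)c^2\\ &+\bigl(2(2d-1)(d-1)a^3-(6d^2-6d+2)a^2+2d(d-s)a+s(1-s)d^2\bigr)c+ad(a-1)(d-1)(ad-a-d). \end{aligned} \]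
   Context: $\lceil x\rceil$ is the least integer not less than $x$. *)

theory Defs
  imports Complex_Main
begin

definition NR :: "int \<Rightarrow> int \<Rightarrow> int \<Rightarrow> int set" where
  "NR a d s = {n. n > 0 \<and>
     \<not> (\<exists>x :: nat \<Rightarrow> int. (\<forall>i. 0 \<le> x i) \<and>
           n = (\<Sum>i = 0..nat s. (a + int i * d) * x i))}"

definition Spow :: "int \<Rightarrow> int \<Rightarrow> int \<Rightarrow> nat \<Rightarrow> int" where
  "Spow a d s m = (\<Sum>n \<in> NR a d s. n ^ m)"

end

theory Submission
  imports Defs
begin

(* The numbers representable by a, a + d, ..., a + s d are exactly the k a + j d with
   0 <= j <= k s.  As gcd(a, d) = 1, the residues j d mod a for 0 <= j < a are pairwise
   distinct, and the least representable number congruent to j d is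
   w_j = ceil(j / s) a + j d (the Apery set with respect to a).  The non-representable
   numbers of that class are the nonnegative n < w_j congruent to w_j, so their power sums
   telescope: F_0 x = x, F_1 x = x (x - a) and F_2 x = x (x - a) (2 x - a) satisfy
   F_m (x + a) - F_m x = kappa_m x^m, whence
   kappa_m S_m = sum_{j<a} F_m (w_j) - sum_{r<a} F_m r.
   The sums over j are evaluated along the staircase j -> ceil(j / s), whose last step
   j = a - 1 has height c. *)

abbreviation ceil_div :: "int \<Rightarrow> int \<Rightarrow> int" where
  "ceil_div j s \<equiv> \<lceil>real_of_int j / real_of_int s\<rceil>"

lemma ceil_div_bounds:
  assumes "s > 0"
  shows "s * (ceil_div j s - 1) < j" and "j \<le> s * ceil_div j s"
proof -
  have "of_int (ceil_div j s) - 1 < real_of_int j / real_of_int s"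
    by (rule ceiling_correct[THEN conjunct1])
  with assms have "real_of_int (s * (ceil_div j s - 1)) < real_of_int j"
    by (simp add: field_simps)
  then show "s * (ceil_div j s - 1) < j" by linarith
  have "real_of_int j \<le> of_int (ceil_div j s) * real_of_int s"
    using le_of_int_ceiling[of "real_of_int j / real_of_int s"] assms
    by (simp only: pos_divide_le_eq of_int_0_less_iff)
  then have "real_of_int j \<le> real_of_int (s * ceil_div j s)"
    by (simp add: mult.commute)
  then show "j \<le> s * ceil_div j s" by linarith
qed

lemma ceil_div_unique:
  assumes "s > 0" "s * (c - 1) < j" "j \<le> s * c"
  shows "ceil_div j s = c"
proof (rule ceiling_unique)
  have "real_of_int (s * (c - 1)) < real_of_int j" "real_of_int j \<le> real_of_int (s * c)"
    using assms(2,3) by linarith+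
  with assms(1) show "of_int c - 1 < real_of_int j / real_of_int s"
    and "real_of_int j / real_of_int s \<le> of_int c"
    by (simp_all add: field_simps)
qed

lemma ceil_div_succ:
  assumes "s > 0"
  shows "ceil_div (j + 1) s = (if j = s * ceil_div j s then ceil_div j s + 1 else ceil_div j s)"
proof (cases "j = s * ceil_div j s")
  case True
  then have "ceil_div (j + 1) s = ceil_div j s + 1"
    using assms by (intro ceil_div_unique) (simp_all add: algebra_simps)
  with True show ?thesis by simp
next
  case False
  then have "ceil_div (j + 1) s = ceil_div j s"
    using assms ceil_div_bounds[OF assms, of j] by (intro ceil_div_unique) simp_all
  with False show ?thesis by simp
qed

lemma sum_ceil_div_staircase:
  fixes h Q :: "int \<Rightarrow> int \<Rightarrow> 'b::ab_group_add"
  assumes "s > 0" "0 \<le> N"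
    and Q_0: "Q 0 0 = h 0 0"
    and Q_succ: "\<And>j k. Q (j + 1) k = Q j k + h k (j + 1)"
    and Q_step_up: "\<And>k. Q (s * k + 1) (k + 1) = Q (s * k) k + h (k + 1) (s * k + 1)"
  shows "(\<Sum>j = 0..N. h (ceil_div j s) j) = Q N (ceil_div N s)"
  using assms(2)
proof (induction N rule: int_ge_induct)
  case base
  then show ?case using Q_0 by simp
next
  case (step N)
  have "{0..N + 1} = insert (N + 1) {0..N}" using step.hyps by auto
  then have "(\<Sum>j = 0..N + 1. h (ceil_div j s) j) =
      Q N (ceil_div N s) + h (ceil_div (N + 1) s) (N + 1)"
    using step.IH by (simp add: add.commute)
  also have "\<dots> = Q (N + 1) (ceil_div (N + 1) s)"
    using ceil_div_succ[OF assms(1), of N] Q_succ[of N] Q_step_up[of "ceil_div N s"]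
    by (cases "N = s * ceil_div N s") auto
  finally show ?case .
qed

lemma sum_int_telescope:
  fixes F g :: "int \<Rightarrow> 'b::ab_group_add"
  assumes "\<And>x. F (x + 1) = F x + g x" and "0 \<le> N"
  shows "(\<Sum>x = 0..<N. g x) = F N - F 0"
  using assms(2)
proof (induction N rule: int_ge_induct)
  case base
  then show ?case by simp
next
  case (step N)
  then have "{0..<N + 1} = insert N {0..<N}" by auto
  then show ?case using step assms(1)[of N] by (simp add: algebra_simps)
qed

lemma residue_class_below_eq_image:
  fixes a w :: int
  assumes "a > 0"
  shows "{n. 0 \<le> n \<and> n < w \<and> n mod a = w mod a} =
    (\<lambda>u. w mod a + u * a) ` {0..<w div a}"
proof (intro equalityI subsetI)
  fix n assume "n \<in> {n. 0 \<le> n \<and> n < w \<and> n mod a = w mod a}"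
  then have n: "0 \<le> n" "n < w" "n mod a = w mod a" by auto
  have "n = w mod a + n div a * a" "w = w mod a + w div a * a"
    using n(3) div_mult_mod_eq[of n a] div_mult_mod_eq[of w a] by linarith+
  with n(2) have "n div a * a < w div a * a" by linarith
  then have "n div a < w div a" using assms by (simp add: mult_less_cancel_right)
  moreover have "0 \<le> n div a" using n(1) assms by (simp add: pos_imp_zdiv_nonneg_iff)
  ultimately show "n \<in> (\<lambda>u. w mod a + u * a) ` {0..<w div a}"
    using \<open>n = w mod a + n div a * a\<close> by auto
next
  fix n assume "n \<in> (\<lambda>u. w mod a + u * a) ` {0..<w div a}"
  then obtain u where u: "0 \<le> u" "u < w div a" and n: "n = w mod a + u * a" by auto
  have "u * a < w div a * a" using u assms by simp
  then have "n < w" using n div_mult_mod_eq[of w a] by linarith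
  moreover have "0 \<le> n" using n u assms by simp
  moreover have "n mod a = w mod a" using n by simp
  ultimately show "n \<in> {n. 0 \<le> n \<and> n < w \<and> n mod a = w mod a}" by simp
qed

lemma sum_residue_class_telescope:
  fixes F g :: "int \<Rightarrow> 'b::ab_group_add"
  assumes "a > 0" "0 \<le> w" and F: "\<And>x. F (x + a) = F x + g x"
  shows "(\<Sum>n | 0 \<le> n \<and> n < w \<and> n mod a = w mod a. g n) = F w - F (w mod a)"
proof -
  have "inj_on (\<lambda>u. w mod a + u * a) {0..<w div a}"
    using assms(1) by (auto simp: inj_on_def)
  then have "(\<Sum>n | 0 \<le> n \<and> n < w \<and> n mod a = w mod a. g n) =
      (\<Sum>u = 0..<w div a. g (w mod a + u * a))"
    by (simp add: residue_class_below_eq_image[OF assms(1)] sum.reindex)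
  also have "\<dots> = F (w mod a + w div a * a) - F (w mod a + 0 * a)"
    using assms
    by (intro sum_int_telescope) (simp_all add: F[symmetric] algebra_simps pos_imp_zdiv_nonneg_iff)
  also have "\<dots> = F w - F (w mod a)" by (simp add: add.commute)
  finally show ?thesis .
qed

definition representable :: "int \<Rightarrow> int \<Rightarrow> int \<Rightarrow> int \<Rightarrow> bool" where
  "representable a d s n \<longleftrightarrow> (\<exists>x :: nat \<Rightarrow> int.
     (\<forall>i. 0 \<le> x i) \<and> n = (\<Sum>i = 0..nat s. (a + int i * d) * x i))"

lemma NR_eq: "NR a d s = {n. 0 < n \<and> \<not> representable a d s n}"
  unfolding NR_def representable_def ..

lemma representable_iff:
  assumes "1 \<le> s"
  shows "representable a d s n \<longleftrightarrow>
    (\<exists>k j. 0 \<le> j \<and> j \<le> k * s \<and> n = k * a + j * d)"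
proof
  assume "representable a d s n"
  then obtain x :: "nat \<Rightarrow> int" where x: "\<forall>i. 0 \<le> x i"
    and n: "n = (\<Sum>i = 0..nat s. (a + int i * d) * x i)"
    unfolding representable_def by blast
  define k where "k = (\<Sum>i = 0..nat s. x i)"
  define j where "j = (\<Sum>i = 0..nat s. int i * x i)"
  have "n = k * a + j * d"
    unfolding n k_def j_def
    by (simp add: algebra_simps sum.distrib sum_distrib_left sum_distrib_right)
  moreover have "0 \<le> j" unfolding j_def using x by (simp add: sum_nonneg)
  moreover have "j \<le> k * s"
  proof -
    have "j \<le> (\<Sum>i = 0..nat s. s * x i)"
      unfolding j_def using x assms by (intro sum_mono mult_right_mono) auto
    also have "\<dots> = k * s" unfolding k_def by (simp add: sum_distrib_left mult.commute)
    finally show ?thesis .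
  qed
  ultimately show "\<exists>k j. 0 \<le> j \<and> j \<le> k * s \<and> n = k * a + j * d" by blast
next
  assume "\<exists>k j. 0 \<le> j \<and> j \<le> k * s \<and> n = k * a + j * d"
  then obtain k j where j: "0 \<le> j" "j \<le> k * s" and n: "n = k * a + j * d" by blast
  define q r where "q = j div s" and "r = j mod s"
  have r: "0 \<le> r" "r < s" and q: "0 \<le> q" and jqr: "j = s * q + r"
    using assms j(1) by (simp_all add: q_def r_def pos_imp_zdiv_nonneg_iff)
  have "q + (if r = 0 then 0 else 1) \<le> k"
    using j(2) jqr r assms by (smt (verit, best) mult.commute mult_less_cancel_left_pos)
  \<comment> \<open>q copies of a + s d, one copy of a + r d and k - q - 1 copies of a;
    for r = 0 the last two merge into k - q copies of a.\<close>
  define x :: "nat \<Rightarrow> int" where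
    "x i = (if i = nat s then q else 0) + (if i = nat r then 1 else 0)
      + (if i = 0 then k - q - 1 else 0)" for i
  have x_nonneg: "\<forall>i. 0 \<le> x i"
    using q r \<open>q + (if r = 0 then 0 else 1) \<le> k\<close> assms by (auto simp: x_def)
  have delta:
    "(\<Sum>i = 0..nat s. (a + int i * d) * (if i = t then v else 0)) = (a + int t * d) * v"
    if "t \<le> nat s" for t v
    using that by (simp add: if_distrib[of "\<lambda>u. _ * u"] cong: if_cong)
  have "(\<Sum>i = 0..nat s. (a + int i * d) * x i) =
      (a + s * d) * q + (a + r * d) + a * (k - q - 1)"
    unfolding x_def distrib_left sum.distrib using r assms by (simp add: delta)
  then have "n = (\<Sum>i = 0..nat s. (a + int i * d) * x i)"
    unfolding n jqr by (simp add: algebra_simps)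
  with x_nonneg show "representable a d s n" unfolding representable_def by blast
qed

definition apery :: "int \<Rightarrow> int \<Rightarrow> int \<Rightarrow> int \<Rightarrow> int" where
  "apery a d s j = ceil_div j s * a + j * d"

lemma apery_mod: "apery a d s j mod a = (j * d) mod a"
  by (simp add: apery_def)

lemma apery_nonneg:
  assumes "0 \<le> a" "0 \<le> d" "1 \<le> s" "0 \<le> j"
  shows "0 \<le> apery a d s j"
proof -
  have "0 \<le> ceil_div j s"
    using assms(3,4) by (simp add: order.strict_trans2[of "- 1" 0])
  with assms show ?thesis by (simp add: apery_def)
qed

lemma coprime_mult_mod_cancel:
  fixes a d i j :: int
  assumes "coprime a d" "(i * d) mod a = (j * d) mod a"
  shows "a dvd i - j"
proof -
  from assms(2) have "a dvd (i - j) * d" by (simp add: mod_eq_dvd_iff algebra_simps)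
  with assms(1) show ?thesis by (simp add: coprime_dvd_mult_left_iff)
qed

lemma bij_betw_mult_mod:
  fixes a d :: int
  assumes "a > 0" "coprime a d"
  shows "bij_betw (\<lambda>j. (j * d) mod a) {0..<a} {0..<a}"
proof -
  have "inj_on (\<lambda>j. (j * d) mod a) {0..<a}"
  proof (rule inj_onI)
    fix i j assume "i \<in> {0..<a}" "j \<in> {0..<a}" "(i * d) mod a = (j * d) mod a"
    with coprime_mult_mod_cancel[OF assms(2)] show "i = j"
      by (metis atLeastLessThan_iff mod_eq_dvd_iff mod_pos_pos_trivial)
  qed
  moreover have "(\<lambda>j. (j * d) mod a) ` {0..<a} \<subseteq> {0..<a}" using assms(1) by auto
  ultimately show ?thesis
    by (simp add: bij_betw_def endo_inj_surj)
qed

lemma representable_iff_apery_le: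
  assumes "a > 0" "0 \<le> d" "coprime a d" "1 \<le> s" "0 \<le> j" "j < a"
    and n: "n mod a = apery a d s j mod a"
  shows "representable a d s n \<longleftrightarrow> apery a d s j \<le> n"
proof
  assume "representable a d s n"
  then obtain k i where i: "0 \<le> i" "i \<le> k * s" and n_eq: "n = k * a + i * d"
    using representable_iff[OF assms(4)] by blast
  from n have "(i * d) mod a = (j * d) mod a" by (simp add: n_eq apery_mod)
  then obtain t where t: "i - j = a * t" using coprime_mult_mod_cancel[OF assms(3)] by blast
  have "a * (- 1) < a * t" using t i(1) assms(6) by simp
  then have "0 \<le> t" using assms(1) by (simp only: mult_less_cancel_left_pos)
  then have "j \<le> i" using t assms(1) by (simp add: algebra_simps)
  moreover have "i \<le> s * k" using i(2) by (simp add: mult.commute)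
  ultimately have "s * (ceil_div j s - 1) < s * k"
    using ceil_div_bounds(1)[of s j] assms(4) by linarith
  then have "ceil_div j s \<le> k" using assms(4) by simp
  have "n - apery a d s j = (k - ceil_div j s) * a + t * a * d"
    using t by (simp add: n_eq apery_def algebra_simps)
  also have "\<dots> \<ge> 0"
    using \<open>ceil_div j s \<le> k\<close> \<open>0 \<le> t\<close> assms(1,2) by simp
  finally show "apery a d s j \<le> n" by simp
next
  assume "apery a d s j \<le> n"
  moreover from n obtain t where t: "n - apery a d s j = a * t"
    by (metis dvdE mod_eq_dvd_iff)
  ultimately have "0 \<le> a * t" by linarith
  with assms(1) have "0 \<le> t" by (simp add: zero_le_mult_iff)
  have "j \<le> s * ceil_div j s" using ceil_div_bounds(2)[of s j] assms(4) by simp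
  also have "\<dots> \<le> (ceil_div j s + t) * s"
    using \<open>0 \<le> t\<close> assms(4) by (simp add: algebra_simps)
  finally have "j \<le> (ceil_div j s + t) * s" .
  moreover have "n = (ceil_div j s + t) * a + j * d"
    using t by (simp add: apery_def algebra_simps)
  ultimately show "representable a d s n"
    using representable_iff[OF assms(4)] assms(5) by blast
qed

lemma NR_eq_UN_residue_classes:
  assumes "a > 0" "0 \<le> d" "coprime a d" "1 \<le> s"
  shows "NR a d s = (\<Union>j\<in>{0..<a}.
    {n. 0 \<le> n \<and> n < apery a d s j \<and> n mod a = apery a d s j mod a})"
    (is "_ = (\<Union>j\<in>{0..<a}. ?C j)")
proof (intro equalityI subsetI)
  fix n assume "n \<in> NR a d s"
  then have "0 < n" and not_rep: "\<not> representable a d s n" by (auto simp: NR_eq)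
  have "n mod a \<in> (\<lambda>j. (j * d) mod a) ` {0..<a}"
    using bij_betw_imp_surj_on[OF bij_betw_mult_mod[OF assms(1,3)]] assms(1) by simp
  then obtain j where j: "j \<in> {0..<a}" "n mod a = apery a d s j mod a"
    by (auto simp: apery_mod)
  with not_rep have "n < apery a d s j"
    using representable_iff_apery_le[OF assms, of j n] by auto
  with j \<open>0 < n\<close> show "n \<in> (\<Union>j\<in>{0..<a}. ?C j)" by auto
next
  fix n assume "n \<in> (\<Union>j\<in>{0..<a}. ?C j)"
  then obtain j where "j \<in> {0..<a}"
    and n: "0 \<le> n" "n < apery a d s j" "n mod a = apery a d s j mod a"
    by auto
  then have "\<not> representable a d s n"
    using representable_iff_apery_le[OF assms] by auto
  moreover have "representable a d s 0"
    using representable_iff[OF assms(4)] by force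
  ultimately show "n \<in> NR a d s" using n(1) by (cases "n = 0") (auto simp: NR_eq)
qed

lemma Spow_telescoping:
  fixes F :: "int \<Rightarrow> int"
  assumes "a > 0" "0 \<le> d" "coprime a d" "1 \<le> s"
    and F: "\<And>x. F (x + a) = F x + \<kappa> * x ^ m"
  shows "\<kappa> * Spow a d s m = (\<Sum>j = 0..<a. F (apery a d s j)) - (\<Sum>r = 0..<a. F r)"
proof -
  let ?C = "\<lambda>j.
    {n. 0 \<le> n \<and> n < apery a d s j \<and> n mod a = apery a d s j mod a}"
  have "finite (?C j)" for j by (rule finite_subset[of _ "{0..<apery a d s j}"]) auto
  moreover have "?C i \<inter> ?C j = {}"
    if "i \<in> {0..<a}" "j \<in> {0..<a}" "i \<noteq> j" for i j
  proof -
    have "(i * d) mod a \<noteq> (j * d) mod a"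
      using that inj_onD[OF bij_betw_imp_inj_on[OF bij_betw_mult_mod[OF assms(1,3)]]] by blast
    then show ?thesis by (auto simp: apery_mod)
  qed
  ultimately have "Spow a d s m = (\<Sum>j = 0..<a. \<Sum>n\<in>?C j. n ^ m)"
    unfolding Spow_def NR_eq_UN_residue_classes[OF assms(1-4)] by (intro sum.UNION_disjoint) auto
  then have "\<kappa> * Spow a d s m = (\<Sum>j = 0..<a. \<Sum>n\<in>?C j. \<kappa> * n ^ m)"
    by (simp add: sum_distrib_left)
  also have "\<dots> = (\<Sum>j = 0..<a. F (apery a d s j) - F (apery a d s j mod a))"
    using assms(1,2,4) apery_nonneg
    by (intro sum.cong refl sum_residue_class_telescope[where F = F, OF _ _ F]) auto
  also have "\<dots> = (\<Sum>j = 0..<a. F (apery a d s j)) - (\<Sum>j = 0..<a. F ((j * d) mod a))"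
    by (simp add: sum_subtractf apery_mod)
  also have "(\<Sum>j = 0..<a. F ((j * d) mod a)) = (\<Sum>r = 0..<a. F r)"
    using sum.reindex_bij_betw[OF bij_betw_mult_mod[OF assms(1,3)]] .
  finally show ?thesis .
qed

lemma sum_apery_0:
  assumes "s > 0" "0 \<le> N"
  defines "c \<equiv> ceil_div N s"
  shows "2 * (\<Sum>j = 0..N. apery a d s j) = d * N * (N + 1) + a * c * (2 * N + s - s * c)"
  unfolding c_def apery_def sum_distrib_left
  by (rule sum_ceil_div_staircase[OF assms(1,2)]; simp add: algebra_simps)

lemma sum_apery_1:
  assumes "s > 0" "0 \<le> N"
  defines "c \<equiv> ceil_div N s"
  shows "6 * (\<Sum>j = 0..N. apery a d s j * (apery a d s j - a)) =
      d^2 * N * (N + 1) * (2 * N + 1) + 3 * a * d * N * (N + 1) * (2 * c - 1)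
    - a * d * s * c * (c - 1) * (3 + s * (2 * c - 1))
    + 6 * a^2 * N * c * (c - 1) - 2 * a^2 * s * c * (c - 1) * (2 * c - 1)"
  unfolding c_def apery_def sum_distrib_left
  by (rule sum_ceil_div_staircase[OF assms(1,2)];
      simp add: algebra_simps power2_eq_square power3_eq_cube)

lemma sum_apery_2:
  assumes "s > 0" "0 \<le> N"
  defines "c \<equiv> ceil_div N s"
  shows "2 * (\<Sum>j = 0..N. apery a d s j * (apery a d s j - a) * (2 * apery a d s j - a)) =
      d^3 * N^2 * (N + 1)^2 + a * d^2 * N * (N + 1) * (2 * N + 1) * (2 * c - 1)
    - a * d^2 * s * c * (c - 1) * (1 + s * (2 * c - 1) + s^2 * c * (c - 1))
    + a^2 * d * N * (N + 1) * (6 * c^2 - 6 * c + 1)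
    - a^2 * d * s * c * (c - 1) * (2 * (2 * c - 1) + 3 * s * c * (c - 1))
    + 2 * a^3 * N * c * (c - 1) * (2 * c - 1) - 3 * a^3 * s * c^2 * (c - 1)^2"
  unfolding c_def apery_def sum_distrib_left
  by (rule sum_ceil_div_staircase[OF assms(1,2)];
      simp add: algebra_simps power2_eq_square power3_eq_cube)

lemma sum_residues_0:
  fixes a :: int
  assumes "0 \<le> a"
  shows "2 * (\<Sum>r = 0..<a. r) = a * (a - 1)"
  using sum_int_telescope[of "\<lambda>x. x * (x - 1)" "\<lambda>x. 2 * x" a] assms
  by (simp add: sum_distrib_left algebra_simps)

lemma sum_residues_1:
  fixes a :: int
  assumes "0 \<le> a"
  shows "6 * (\<Sum>r = 0..<a. r * (r - a)) = - (a - 1) * a * (a + 1)"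
  using sum_int_telescope[of "\<lambda>x. x * (x - 1) * (2 * x - 1 - 3 * a)" "\<lambda>x. 6 * (x * (x - a))" a]
    assms
  by (simp add: sum_distrib_left algebra_simps)

lemma sum_residues_2:
  fixes a :: int
  assumes "0 \<le> a"
  shows "(\<Sum>r = 0..<a. r * (r - a) * (2 * r - a)) = 0"
proof -
  have "(\<Sum>r = 0..<a. 2 * (r * (r - a) * (2 * r - a))) = 0"
    using sum_int_telescope[where F = "\<lambda>x. x * (x - 1) * (x - a) * (x - a - 1)", OF _ assms]
    by (simp add: algebra_simps)
  then show ?thesis by (simp add: sum_distrib_left[symmetric])
qed

lemma Spow_0_closed_form:
  assumes "a > 0" "0 \<le> d" "coprime a d" "1 \<le> s"
  defines "c \<equiv> ceil_div (a - 1) s"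
  shows "2 * Spow a d s 0 = - s * c^2 + (2*a - 2 + s) * c + (a - 1) * (d - 1)"
proof -
  have "a * (2 * Spow a d s 0) =
      2 * (\<Sum>j = 0..a - 1. apery a d s j) - 2 * (\<Sum>r = 0..<a. r)"
    using Spow_telescoping[OF assms(1-4), of "\<lambda>x. x" a 0]
      atLeastLessThanPlusOne_atLeastAtMost_int[of 0 "a - 1"]
    by simp
  also have "\<dots> = a * (- s * c^2 + (2*a - 2 + s) * c + (a - 1) * (d - 1))"
    using sum_apery_0[of s "a - 1" a d] sum_residues_0[of a] assms(1,4)
    unfolding c_def by (simp add: algebra_simps power2_eq_square)
  finally show ?thesis using assms(1) by simp
qed

lemma Spow_1_closed_form:
  assumes "a > 0" "0 \<le> d" "coprime a d" "1 \<le> s"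
  defines "c \<equiv> ceil_div (a - 1) s"
  shows "12 * Spow a d s 1 = - 2 * s * (2*a + d*s) * c^3
           + (6 * a^2 + 3 * (2*a + d*s) * (s - 1)) * c^2
           + (6 * (d - 1) * a * (a - 1) + (3*d - 2*a - d*s) * s) * c
           + (a - 1) * (d - 1) * (2*a*d - a - d - 1)"
proof -
  have "a * (12 * Spow a d s 1) =
      6 * (\<Sum>j = 0..a - 1. apery a d s j * (apery a d s j - a))
    - 6 * (\<Sum>r = 0..<a. r * (r - a))"
    using Spow_telescoping[OF assms(1-4), of "\<lambda>x. x * (x - a)" "2 * a" 1]
      atLeastLessThanPlusOne_atLeastAtMost_int[of 0 "a - 1"]
    by (simp add: algebra_simps)
  also have "\<dots> = a * (- 2 * s * (2*a + d*s) * c^3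
           + (6 * a^2 + 3 * (2*a + d*s) * (s - 1)) * c^2
           + (6 * (d - 1) * a * (a - 1) + (3*d - 2*a - d*s) * s) * c
           + (a - 1) * (d - 1) * (2*a*d - a - d - 1))"
    using sum_apery_1[of s "a - 1" a d] sum_residues_1[of a] assms(1,4)
    unfolding c_def by (simp add: algebra_simps power2_eq_square power3_eq_cube)
  finally show ?thesis using assms(1) by simp
qed

lemma Spow_2_closed_form:
  assumes "a > 0" "0 \<le> d" "coprime a d" "1 \<le> s"
  defines "c \<equiv> ceil_div (a - 1) s"
  shows "12 * Spow a d s 2 = - s * ((a + s*d) * (2*a + s*d) + a^2) * c^4
           + (4 * a^3 + 2 * (3*s - 2) * a^2 + 2 * s * d * (3*s - 2) * a + 2 * s^2 * d^2 * (s - 1)) * c^3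
           + (6 * (d - 1) * a^3 + 3 * (2 - s - 2*d) * a^2 - 3 * s * d * (s - 2) * a
              - s * d^2 * (s^2 - 3*s + 1)) * c^2
           + (2 * (2*d - 1) * (d - 1) * a^3 - (6 * d^2 - 6*d + 2) * a^2 + 2 * d * (d - s) * a
              + s * (1 - s) * d^2) * c
           + a * d * (a - 1) * (d - 1) * (a*d - a - d)"
proof -
  have "a * (12 * Spow a d s 2) =
      2 * (\<Sum>j = 0..a - 1. apery a d s j * (apery a d s j - a) * (2 * apery a d s j - a))
    - 2 * (\<Sum>r = 0..<a. r * (r - a) * (2 * r - a))"
    using Spow_telescoping[OF assms(1-4), of "\<lambda>x. x * (x - a) * (2 * x - a)" "6 * a" 2]
      atLeastLessThanPlusOne_atLeastAtMost_int[of 0 "a - 1"]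
    by (simp add: algebra_simps power2_eq_square)
  also have "\<dots> = a * (- s * ((a + s*d) * (2*a + s*d) + a^2) * c^4
           + (4 * a^3 + 2 * (3*s - 2) * a^2 + 2 * s * d * (3*s - 2) * a + 2 * s^2 * d^2 * (s - 1)) * c^3
           + (6 * (d - 1) * a^3 + 3 * (2 - s - 2*d) * a^2 - 3 * s * d * (s - 2) * a
              - s * d^2 * (s^2 - 3*s + 1)) * c^2
           + (2 * (2*d - 1) * (d - 1) * a^3 - (6 * d^2 - 6*d + 2) * a^2 + 2 * d * (d - s) * a
              + s * (1 - s) * d^2) * c
           + a * d * (a - 1) * (d - 1) * (a*d - a - d))"
    using sum_apery_2[of s "a - 1" a d] sum_residues_2[of a] assms(1,4)
    unfolding c_def by (simp add: algebra_simps power2_eq_square power3_eq_cube power4_eq_xxxx)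
  finally show ?thesis using assms(1) by simp
qed

theorem mainTheorem6:
  fixes a d s c :: int
  assumes "a \<ge> 2" and "d \<ge> 1" and "gcd a d = 1" and "1 \<le> s" and "s < a"
    and "c = \<lceil>real_of_int (a - 1) / real_of_int s\<rceil>"
  shows "2 * Spow a d s 0 = - s * c^2 + (2*a - 2 + s) * c + (a - 1) * (d - 1) \<and>
         12 * Spow a d s 1 = - 2 * s * (2*a + d*s) * c^3
           + (6 * a^2 + 3 * (2*a + d*s) * (s - 1)) * c^2
           + (6 * (d - 1) * a * (a - 1) + (3*d - 2*a - d*s) * s) * c
           + (a - 1) * (d - 1) * (2*a*d - a - d - 1) \<and>
         12 * Spow a d s 2 = - s * ((a + s*d) * (2*a + s*d) + a^2) * c^4
           + (4 * a^3 + 2 * (3*s - 2) * a^2 + 2 * s * d * (3*s - 2) * a + 2 * s^2 * d^2 * (s - 1)) * c^3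
           + (6 * (d - 1) * a^3 + 3 * (2 - s - 2*d) * a^2 - 3 * s * d * (s - 2) * a
              - s * d^2 * (s^2 - 3*s + 1)) * c^2
           + (2 * (2*d - 1) * (d - 1) * a^3 - (6 * d^2 - 6*d + 2) * a^2 + 2 * d * (d - s) * a
              + s * (1 - s) * d^2) * c
           + a * d * (a - 1) * (d - 1) * (a*d - a - d)"
proof -
  have "0 < a" "0 \<le> d" "coprime a d" "1 \<le> s"
    using assms(1-4) by (simp_all add: coprime_iff_gcd_eq_1)
  then show ?thesis
    unfolding assms(6) using Spow_0_closed_form Spow_1_closed_form Spow_2_closed_form by blast
qed

end
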